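(* Let $\Phi$ be a $(3,3)$-monotone formula with $n$ clauses and $n$ variables, and let $G_\Phi$ be the graph constructed from it as described in the context. Then the complement $\overline{G_\Phi}$ has no fall colouring using more than $\frac{7}{3}n$ colours.
   Context: A $(3,3)$-monotone formula is a set $C$ of clauses over a variable set $X$, where each clause consists of three distinct (positive, unnegated) variables and each variable occurs in exactly three clauses, so $|C|=|X|=n$. The graph $G_\Phi$ has $5n$ vertices: for each clause $c\in C$ with variables $x,y,z$ (in an arbitrary fixed order) there are vertices $c(x),c(y),c(z)$ ($c$-type) and $a_1^c,a_2^c$ ($a$-type) forming the path $c(x)\,a_1^c\,c(y)\,a_2^c\,c(z)$; and for each variable $x$ occurring in clauses $c,c',c''$, the three vertices $c(x),c'(x),c''(x)$ form a triangle. There are no other edges. A colouring of a graph is a map to $\mathbb{Z}^+$ with adjacent vertices receiving distinct colours; a fall colouring is a colouring in which every vertex is adjacent to a vertex of every colour used other than its own. $\overline{G}$ denotes the complement of $G$. *)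

theory Defs
  imports Complex_Main
begin

definition monotone33 :: "'v set \<Rightarrow> 'v set set \<Rightarrow> bool" where
  "monotone33 X C \<longleftrightarrow> finite X \<and> finite C \<and>
     (\<forall>c\<in>C. c \<subseteq> X \<and> card c = 3) \<and>
     (\<forall>x\<in>X. card {c\<in>C. x \<in> c} = 3)"

definition clause_order :: "'v set set \<Rightarrow> ('v set \<Rightarrow> 'v \<times> 'v \<times> 'v) \<Rightarrow> bool" where
  "clause_order C ord \<longleftrightarrow> (\<forall>c\<in>C. case ord c of (x, y, z) \<Rightarrow> c = {x, y, z})"

datatype 'v gvert = CV "'v set" 'v | A1 "'v set" | A2 "'v set"

definition G_verts :: "'v set set \<Rightarrow> 'v gvert set" where
  "G_verts C = {CV c x | c x. c \<in> C \<and> x \<in> c} \<union> A1 ` C \<union> A2 ` C"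

text \<open>Directed list of edges before symmetrisation: path c(x) a1 c(y) a2 c(z) and triangles.\<close>
definition G_edge0 :: "'v set set \<Rightarrow> ('v set \<Rightarrow> 'v \<times> 'v \<times> 'v) \<Rightarrow> 'v gvert \<Rightarrow> 'v gvert \<Rightarrow> bool" where
  "G_edge0 C ord u w \<longleftrightarrow>
     (\<exists>c\<in>C. case ord c of (x, y, z) \<Rightarrow>
        (u = CV c x \<and> w = A1 c) \<or> (u = A1 c \<and> w = CV c y) \<or>
        (u = CV c y \<and> w = A2 c) \<or> (u = A2 c \<and> w = CV c z)) \<or>
     (\<exists>c\<in>C. \<exists>c'\<in>C. \<exists>x. c \<noteq> c' \<and> x \<in> c \<and> x \<in> c' \<and> u = CV c x \<and> w = CV c' x)"

definition G_adj :: "'v set set \<Rightarrow> ('v set \<Rightarrow> 'v \<times> 'v \<times> 'v) \<Rightarrow> 'v gvert \<Rightarrow> 'v gvert \<Rightarrow> bool" where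
  "G_adj C ord u w \<longleftrightarrow> G_edge0 C ord u w \<or> G_edge0 C ord w u"

definition compl_adj :: "'a set \<Rightarrow> ('a \<Rightarrow> 'a \<Rightarrow> bool) \<Rightarrow> 'a \<Rightarrow> 'a \<Rightarrow> bool" where
  "compl_adj V E u w \<longleftrightarrow> u \<in> V \<and> w \<in> V \<and> u \<noteq> w \<and> \<not> E u w"

definition colouring :: "'a set \<Rightarrow> ('a \<Rightarrow> 'a \<Rightarrow> bool) \<Rightarrow> ('a \<Rightarrow> nat) \<Rightarrow> bool" where
  "colouring V E f \<longleftrightarrow> (\<forall>v\<in>V. f v > 0) \<and> (\<forall>u\<in>V. \<forall>w\<in>V. E u w \<longrightarrow> f u \<noteq> f w)"

definition fall_colouring :: "'a set \<Rightarrow> ('a \<Rightarrow> 'a \<Rightarrow> bool) \<Rightarrow> ('a \<Rightarrow> nat) \<Rightarrow> bool" where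
  "fall_colouring V E f \<longleftrightarrow> colouring V E f \<and>
     (\<forall>v\<in>V. \<forall>k\<in>f ` V. k \<noteq> f v \<longrightarrow> (\<exists>u\<in>V. E v u \<and> f u = k))"

end

theory Submission
  imports Defs
begin

text \<open>In a fall colouring of the complement of G, every colour class is a clique of G to
which no outside vertex is completely joined, i.e. a maximal clique of G. Since
\<open>G\<^sub>\<Phi>\<close> has no isolated vertices and every edge between two c-type vertices lies
in a triangle, each colour class K satisfies \<open>|K| + |K \<inter> A| \<ge> 3\<close>, where A is the
set of the 2n a-type vertices. Summing over the k classes gives
\<open>3k \<le> |V| + |A| = 5n + 2n\<close>.\<close>

lemma fall_colouring_compl_class_clique:
  assumes "fall_colouring V (compl_adj V E) f"
    and "u \<in> V" "w \<in> V" "u \<noteq> w" "f u = f w"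
  shows "E u w"
  using assms by (auto simp: fall_colouring_def colouring_def compl_adj_def)

lemma fall_colouring_compl_class_maximal:
  assumes "fall_colouring V (compl_adj V E) f"
    and "v \<in> V" "k \<in> f ` V" "f v \<noteq> k"
  shows "\<exists>u\<in>V. f u = k \<and> \<not> E v u"
proof -
  have "\<exists>u\<in>V. compl_adj V E v u \<and> f u = k"
    using assms by (metis fall_colouring_def)
  then show ?thesis by (auto simp: compl_adj_def)
qed

lemma fall_colouring_compl_class_not_singleton:
  assumes fall: "fall_colouring V (compl_adj V E) f" and "symp E"
    and "v \<in> V" "u \<in> V" "u \<noteq> v" "E v u"
  shows "\<exists>w\<in>V. w \<noteq> v \<and> f w = f v"
proof (cases "f u = f v")
  case True
  with assms(4,5) show ?thesis by blast
next
  case False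
  then obtain w where "w \<in> V" "f w = f v" "\<not> E u w"
    using fall_colouring_compl_class_maximal[OF fall, of u "f v"] assms(3,4) by auto
  with \<open>symp E\<close> \<open>E v u\<close> show ?thesis by (metis sympD)
qed

lemma card_eq_sum_card_fibres:
  assumes "finite S" "finite T" "g ` S \<subseteq> T"
  shows "card S = (\<Sum>y\<in>T. card {x\<in>S. g x = y})"
  using sum.group[OF assms, of "\<lambda>_. 1::nat"] by simp

lemma card_image_le_weighted:
  assumes "finite V" "A \<subseteq> V"
    and weight: "\<And>k. k \<in> f ` V \<Longrightarrow> m \<le> card {v\<in>V. f v = k} + card {v\<in>A. f v = k}"
  shows "m * card (f ` V) \<le> card V + card A"
proof -
  have "finite A" "finite (f ` V)" using assms(1,2) finite_subset by auto
  have "m * card (f ` V) = (\<Sum>k\<in>f ` V. m)" by simp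
  also have "\<dots> \<le> (\<Sum>k\<in>f ` V. card {v\<in>V. f v = k} + card {v\<in>A. f v = k})"
    using weight by (rule sum_mono)
  also have "\<dots> = card V + card A"
    using card_eq_sum_card_fibres[where g = f, OF \<open>finite V\<close> \<open>finite (f ` V)\<close> subset_refl]
      card_eq_sum_card_fibres[where g = f, OF \<open>finite A\<close> \<open>finite (f ` V)\<close> image_mono]
      \<open>A \<subseteq> V\<close>
    by (simp add: sum.distrib)
  finally show ?thesis .
qed

lemma monotone33_third_clause:
  assumes "monotone33 X C" "c \<in> C" "c' \<in> C" "c \<noteq> c'" "x \<in> c" "x \<in> c'"
  shows "\<exists>d\<in>C. x \<in> d \<and> d \<noteq> c \<and> d \<noteq> c'"
proof (rule ccontr)
  assume "\<not> ?thesis"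
  then have "{d\<in>C. x \<in> d} \<subseteq> {c, c'}" by auto
  then have "card {d\<in>C. x \<in> d} \<le> card {c, c'}" by (simp add: card_mono)
  also have "\<dots> = 2" using assms(4) by simp
  finally have "card {d\<in>C. x \<in> d} \<le> 2" .
  moreover have "x \<in> X" using assms(1,2,5) by (auto simp: monotone33_def)
  ultimately show False using assms(1) by (auto simp: monotone33_def)
qed

definition G_a_verts :: "'v set set \<Rightarrow> 'v gvert set" where
  "G_a_verts C = A1 ` C \<union> A2 ` C"

lemma G_a_verts_subset: "G_a_verts C \<subseteq> G_verts C"
  by (auto simp: G_a_verts_def G_verts_def)

lemma card_G_a_verts:
  assumes "finite C"
  shows "card (G_a_verts C) = 2 * card C"
proof -
  have "card (A1 ` C \<union> A2 ` C) = card (A1 ` C) + card (A2 ` C)"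
    by (rule card_Un_disjoint) (use assms in auto)
  also have "\<dots> = card C + card C"
    by (simp add: card_image inj_on_def)
  finally show ?thesis by (simp add: G_a_verts_def)
qed

lemma card_G_verts:
  assumes "monotone33 X C"
  shows "card (G_verts C) = 5 * card C"
proof -
  have "finite C" and c3: "\<forall>c\<in>C. c \<subseteq> X \<and> card c = 3" and "finite X"
    using assms by (auto simp: monotone33_def)
  then have fin_clauses: "\<forall>c\<in>C. finite c" using finite_subset by blast
  define S where "S = (\<lambda>(c, x). CV c x) ` (SIGMA c:C. c)"
  have "card S = card (SIGMA c:C. c)"
    unfolding S_def by (rule card_image) (auto simp: inj_on_def)
  also have "\<dots> = (\<Sum>c\<in>C. card c)" using \<open>finite C\<close> fin_clauses by simp
  also have "\<dots> = 3 * card C" using c3 by simp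
  finally have "card S = 3 * card C" .
  moreover have "G_verts C = S \<union> G_a_verts C" by (auto simp: G_verts_def G_a_verts_def S_def)
  moreover have "card (S \<union> G_a_verts C) = card S + card (G_a_verts C)"
    by (rule card_Un_disjoint) (use \<open>finite C\<close> fin_clauses in \<open>auto simp: S_def G_a_verts_def\<close>)
  ultimately show ?thesis using card_G_a_verts[OF \<open>finite C\<close>] by simp
qed

lemma finite_G_verts:
  assumes "monotone33 X C"
  shows "finite (G_verts C)"
proof -
  have "finite C" using assms by (simp add: monotone33_def)
  show ?thesis
  proof (cases "C = {}")
    case False
    then show ?thesis using card_G_verts[OF assms] \<open>finite C\<close> card.infinite by fastforce
  qed (simp add: G_verts_def)
qed

lemma symp_G_adj: "symp (G_adj C ord)"
  by (auto simp: G_adj_def intro: sympI)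

lemma G_adj_neq: "G_adj C ord u w \<Longrightarrow> u \<noteq> w"
  unfolding G_adj_def G_edge0_def by (auto simp: case_prod_beta)

lemma G_adj_CV_iff:
  assumes "c \<in> C" "c' \<in> C" "x \<in> c" "y \<in> c'"
  shows "G_adj C ord (CV c x) (CV c' y) \<longleftrightarrow> x = y \<and> c \<noteq> c'"
  using assms by (auto simp: G_adj_def G_edge0_def split: prod.splits)

lemma G_adj_has_neighbour:
  assumes "clause_order C ord" "v \<in> G_verts C"
  shows "\<exists>u\<in>G_verts C. G_adj C ord v u"
proof -
  obtain c where "c \<in> C" and v: "v = A1 c \<or> v = A2 c \<or> (\<exists>x\<in>c. v = CV c x)"
    using assms(2) by (auto simp: G_verts_def)
  obtain x y z where ord: "ord c = (x, y, z)" by (cases "ord c") auto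
  with assms(1) \<open>c \<in> C\<close> have "c = {x, y, z}" by (auto simp: clause_order_def)
  then have "CV c x \<in> G_verts C" "CV c y \<in> G_verts C" "CV c z \<in> G_verts C"
    "A1 c \<in> G_verts C" "A2 c \<in> G_verts C"
    using \<open>c \<in> C\<close> by (auto simp: G_verts_def)
  moreover have "G_adj C ord (A1 c) (CV c x)" "G_adj C ord (A2 c) (CV c z)"
    "G_adj C ord (CV c x) (A1 c)" "G_adj C ord (CV c y) (A1 c)" "G_adj C ord (CV c z) (A2 c)"
    using \<open>c \<in> C\<close> ord unfolding G_adj_def G_edge0_def by force+
  ultimately show ?thesis using v \<open>c = {x, y, z}\<close> by blast
qed

text \<open>Two c-type vertices of the same colour are c(x), c'(x) for clauses c \<noteq> c'; the third
clause d containing x gives d(x), adjacent to both, so the class cannot be just these two.\<close>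

lemma fall_colouring_G_c_pair_class:
  assumes "monotone33 X C"
    and fall: "fall_colouring (G_verts C) (compl_adj (G_verts C) (G_adj C ord)) f"
    and p: "p \<in> G_verts C" "p \<notin> G_a_verts C" and q: "q \<in> G_verts C" "q \<notin> G_a_verts C"
    and "p \<noteq> q" "f p = f q"
  shows "\<exists>r\<in>G_verts C. r \<noteq> p \<and> r \<noteq> q \<and> f r = f p"
proof -
  obtain c c' x y where cx: "c \<in> C" "x \<in> c" "p = CV c x"
    and c'y: "c' \<in> C" "y \<in> c'" "q = CV c' y"
    using p q by (auto simp: G_verts_def G_a_verts_def)
  have "G_adj C ord p q"
    using fall_colouring_compl_class_clique[OF fall p(1) q(1) \<open>p \<noteq> q\<close> \<open>f p = f q\<close>] .
  then have "x = y" "c \<noteq> c'"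
    using G_adj_CV_iff[OF cx(1) c'y(1) cx(2) c'y(2)] cx(3) c'y(3) by simp_all
  then obtain d where d: "d \<in> C" "x \<in> d" "d \<noteq> c" "d \<noteq> c'"
    using monotone33_third_clause[OF assms(1) cx(1) c'y(1) _ cx(2)] c'y(2) by blast
  define r where "r = CV d x"
  have r: "r \<in> G_verts C" "r \<noteq> p" "r \<noteq> q"
    using d cx(3) c'y(3) \<open>x = y\<close> by (auto simp: r_def G_verts_def)
  have adj: "G_adj C ord r p" "G_adj C ord r q"
    using G_adj_CV_iff[OF d(1) cx(1) d(2) cx(2)] G_adj_CV_iff[OF d(1) c'y(1) d(2) c'y(2)]
      d(3,4) cx(3) c'y(3) \<open>x = y\<close> by (simp_all add: r_def)
  show ?thesis
  proof (cases "f r = f p")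
    case False
    then obtain w where w: "w \<in> G_verts C" "f w = f p" "\<not> G_adj C ord r w"
      using fall_colouring_compl_class_maximal[OF fall r(1), of "f p"] p(1) by auto
    then have "w \<noteq> p" "w \<noteq> q" using adj by auto
    with w show ?thesis by blast
  qed (use r in blast)
qed

lemma fall_colouring_G_class_weight:
  assumes "monotone33 X C" "clause_order C ord"
    and fall: "fall_colouring (G_verts C) (compl_adj (G_verts C) (G_adj C ord)) f"
    and "k \<in> f ` G_verts C"
  shows "3 \<le> card {v\<in>G_verts C. f v = k} + card {v\<in>G_a_verts C. f v = k}"
    (is "_ \<le> card ?K + card ?KA")
proof (rule ccontr)
  assume light: "\<not> ?thesis"
  have "finite (G_verts C)" using finite_G_verts[OF assms(1)] .
  then have "finite ?K" "finite ?KA" using rev_finite_subset[OF _ G_a_verts_subset, of C] by auto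
  obtain v where v: "v \<in> G_verts C" "f v = k" using assms(4) by auto
  obtain u where u: "u \<in> G_verts C" "G_adj C ord v u"
    using G_adj_has_neighbour[OF assms(2) v(1)] by blast
  have "u \<noteq> v" using G_adj_neq[OF u(2)] by simp
  then obtain w where w: "w \<in> G_verts C" "w \<noteq> v" "f w = k"
    using fall_colouring_compl_class_not_singleton[OF fall symp_G_adj v(1) u(1) _ u(2)] v(2)
    by blast
  have pair: "{v, w} \<subseteq> ?K" using v w by auto
  have "card {v, w} = 2" using w(2) by simp
  then have "2 \<le> card ?K" using card_mono[OF \<open>finite ?K\<close> pair] by simp
  with light have "card ?K = card {v, w}" "card ?KA = 0" using \<open>card {v, w} = 2\<close> by linarith+
  then have "?K = {v, w}" "?KA = {}"
    using card_subset_eq[OF \<open>finite ?K\<close> pair] \<open>finite ?KA\<close> by auto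
  then have "v \<notin> G_a_verts C" "w \<notin> G_a_verts C" using v w by auto
  then obtain r where "r \<in> G_verts C" "r \<noteq> v" "r \<noteq> w" "f r = k"
    using fall_colouring_G_c_pair_class[OF assms(1) fall v(1) _ w(1) _ w(2)[symmetric]] v(2) w(3)
    by auto
  with \<open>?K = {v, w}\<close> show False by blast
qed

theorem mainTheorem19:
  fixes X :: "'v set" and C :: "'v set set" and ord :: "'v set \<Rightarrow> 'v \<times> 'v \<times> 'v"
    and f :: "'v gvert \<Rightarrow> nat"
  assumes "monotone33 X C"
    and "clause_order C ord"
    and "fall_colouring (G_verts C) (compl_adj (G_verts C) (G_adj C ord)) f"
  shows "real (card (f ` G_verts C)) \<le> 7 / 3 * real (card C)"
proof -
  have "3 * card (f ` G_verts C) \<le> card (G_verts C) + card (G_a_verts C)"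
    using card_image_le_weighted[OF finite_G_verts[OF assms(1)] G_a_verts_subset]
      fall_colouring_G_class_weight[OF assms] by blast
  also have "\<dots> = 7 * card C"
    using card_G_verts[OF assms(1)] card_G_a_verts[of C] assms(1) by (simp add: monotone33_def)
  finally show ?thesis by simp
qed

end
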